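(* Let $\{\mathcal{S}(t)\}_{t\ge0}$ be a GSP with parameters $\lambda_1,\dots,\lambda_k,\mu_1,\dots,\mu_k\ge0$, $\Lambda=\sum_j\lambda_j$, $T=\sum_j\mu_j$, $\Lambda+T>0$, and let $\mathcal{S}_A(t)=\frac1t\int_0^t\mathcal{S}(s)\,ds$. Let $\{N(t)\}_{t\ge0}$ be a Poisson process with rate $\Lambda+T$, and $X_1,X_2,\dots$ i.i.d., independent of $N$, with density $$f(x)=\frac{1}{\Lambda+T}\sum_{j=1}^k\frac{\lambda_j}{j}\mathbf{1}_{[0,j]}(x)+\frac{1}{\Lambda+T}\sum_{j=1}^k\frac{\mu_j}{j}\mathbf{1}_{[-j,0]}(x).$$ Then for every $t>0$, $\mathcal{S}_A(t)\overset{d}{=}\sum_{i=1}^{N(t)}X_i$.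
   Context: A generalized counting process (GCP) with rates $\lambda_1,\dots,\lambda_k\ge0$ is a Lévy process $\{\mathbb{M}(t)\}_{t\ge0}$ with $\mathbb{M}(0)=0$ and $\mathbb{E}[u^{\mathbb{M}(t)}]=\exp\left(t\sum_{j=1}^k\lambda_j(u^j-1)\right)$. A generalized Skellam process (GSP) is $\mathcal{S}(t)=\mathbb{M}_1(t)-\mathbb{M}_2(t)$ where $\mathbb{M}_1,\mathbb{M}_2$ are independent GCPs with rates $\lambda_1,\dots,\lambda_k$ and $\mu_1,\dots,\mu_k$ respectively. *)

theory Defs
  imports "HOL-Probability.Probability"
begin

definition cadlag_path :: "(real \<Rightarrow> real) \<Rightarrow> bool" where
  "cadlag_path p \<longleftrightarrow>
     (\<forall>t\<ge>0. (p \<longlongrightarrow> p t) (at_right t)) \<and>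
     (\<forall>t>0. \<exists>l. (p \<longlongrightarrow> l) (at_left t))"

definition is_GCP :: "'a measure \<Rightarrow> nat \<Rightarrow> (nat \<Rightarrow> real) \<Rightarrow> (real \<Rightarrow> 'a \<Rightarrow> nat) \<Rightarrow> bool" where
  "is_GCP M k lam X \<longleftrightarrow>
     prob_space M \<and>
     (\<forall>j\<in>{1..k}. lam j \<ge> 0) \<and>
     (\<forall>t\<ge>0. X t \<in> measurable M (count_space (UNIV::nat set))) \<and>
     (\<forall>\<omega>\<in>space M. X 0 \<omega> = 0) \<and>
     (\<forall>\<omega>\<in>space M. cadlag_path (\<lambda>s. real (X s \<omega>))) \<and>
     (\<forall>(n::nat) (\<tau>::nat \<Rightarrow> real). 0 \<le> \<tau> 0 \<and> (\<forall>i<n. \<tau> i \<le> \<tau> (Suc i)) \<longrightarrow>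
        prob_space.indep_vars M (\<lambda>_. borel)
          (\<lambda>i \<omega>. real (X (\<tau> (Suc i)) \<omega>) - real (X (\<tau> i) \<omega>)) {..<n}) \<and>
     (\<forall>s t. 0 \<le> s \<longrightarrow> 0 \<le> t \<longrightarrow>
        distr M borel (\<lambda>\<omega>. real (X (s + t) \<omega>) - real (X s \<omega>))
          = distr M borel (\<lambda>\<omega>. real (X t \<omega>))) \<and>
     (\<forall>t\<ge>0. \<forall>u::real. \<bar>u\<bar> \<le> 1 \<longrightarrow>
        integral\<^sup>L M (\<lambda>\<omega>. u ^ X t \<omega>) = exp (t * (\<Sum>j=1..k. lam j * (u ^ j - 1))))"

text \<open>Independence of two random elements with possibly different value types
  (the library's indep_var requires equal types): both are measurable and the
  sigma-algebras they generate are independent.\<close>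
definition indep_rv :: "'a measure \<Rightarrow> 'b measure \<Rightarrow> ('a \<Rightarrow> 'b) \<Rightarrow> 'c measure \<Rightarrow> ('a \<Rightarrow> 'c) \<Rightarrow> bool" where
  "indep_rv M Ma A Mb B \<longleftrightarrow>
     A \<in> measurable M Ma \<and> B \<in> measurable M Mb \<and>
     prob_space.indep_set M (sets (vimage_algebra (space M) A Ma))
                            (sets (vimage_algebra (space M) B Mb))"

definition path_of :: "(real \<Rightarrow> 'a \<Rightarrow> 'b) \<Rightarrow> 'a \<Rightarrow> real \<Rightarrow> 'b" where
  "path_of X \<omega> = (\<lambda>t\<in>{0..}. X t \<omega>)"

definition is_GSP_pair :: "'a measure \<Rightarrow> nat \<Rightarrow> (nat \<Rightarrow> real) \<Rightarrow> (nat \<Rightarrow> real)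
    \<Rightarrow> (real \<Rightarrow> 'a \<Rightarrow> nat) \<Rightarrow> (real \<Rightarrow> 'a \<Rightarrow> nat) \<Rightarrow> bool" where
  "is_GSP_pair M k lam mu M1 M2 \<longleftrightarrow>
     is_GCP M k lam M1 \<and> is_GCP M k mu M2 \<and>
     indep_rv M
       (Pi\<^sub>M {0::real..} (\<lambda>_. count_space (UNIV::nat set))) (path_of M1)
       (Pi\<^sub>M {0::real..} (\<lambda>_. count_space (UNIV::nat set))) (path_of M2)"

definition GSP :: "(real \<Rightarrow> 'a \<Rightarrow> nat) \<Rightarrow> (real \<Rightarrow> 'a \<Rightarrow> nat) \<Rightarrow> real \<Rightarrow> 'a \<Rightarrow> real" where
  "GSP M1 M2 t \<omega> = real (M1 t \<omega>) - real (M2 t \<omega>)"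

definition time_avg :: "(real \<Rightarrow> 'a \<Rightarrow> real) \<Rightarrow> real \<Rightarrow> 'a \<Rightarrow> real" where
  "time_avg S t \<omega> = (1 / t) * integral {0..t} (\<lambda>s. S s \<omega>)"

definition is_poisson_process :: "'a measure \<Rightarrow> real \<Rightarrow> (real \<Rightarrow> 'a \<Rightarrow> nat) \<Rightarrow> bool" where
  "is_poisson_process M r N \<longleftrightarrow> is_GCP M 1 (\<lambda>_. r) N"

definition gsp_density :: "nat \<Rightarrow> (nat \<Rightarrow> real) \<Rightarrow> (nat \<Rightarrow> real) \<Rightarrow> real \<Rightarrow> real" where
  "gsp_density k lam mu x =
     1 / ((\<Sum>j=1..k. lam j) + (\<Sum>j=1..k. mu j)) *
       (\<Sum>j=1..k. lam j / real j * indicator {0..real j} x)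
   + 1 / ((\<Sum>j=1..k. lam j) + (\<Sum>j=1..k. mu j)) *
       (\<Sum>j=1..k. mu j / real j * indicator {- real j..0} x)"

end

theory Submission
  imports Defs "HOL-Complex_Analysis.Complex_Analysis"
begin

text \<open>Both distributions are identified through their characteristic functions (Levy's
  uniqueness theorem). The time average is the limit of right Riemann means of the cadlag paths.
  For a generalized counting process such a mean is a weighted sum of independent stationary
  increments, whose characteristic functions come from the generating function, continued
  analytically to the unit circle. As the mesh tends to zero, the rate \<open>\<lambda>\<^sub>j\<close> contributes
  \<open>t \<lambda>\<^sub>j (\<phi>\<^sub>j(\<theta>) - 1)\<close>, where \<open>\<phi>\<^sub>j\<close> is the characteristic function of the uniform
  distribution on \<open>[0, j]\<close>; the rate \<open>\<mu>\<^sub>j\<close> contributes the same with \<open>-\<theta>\<close>. The compound Poisson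
  sum has characteristic function \<open>exp (t (\<Lambda> + T) (\<phi>\<^sub>f(\<theta>) - 1))\<close>, and \<open>\<phi>\<^sub>f\<close> is exactly the
  corresponding mixture of uniform characteristic functions.\<close>

lemma sets_vimage_algebra_comp_subset:
  assumes "g \<in> X \<rightarrow> space N" and "f \<in> measurable N K"
  shows "sets (vimage_algebra X (\<lambda>x. f (g x)) K) \<subseteq> sets (vimage_algebra X g N)"
  by (rule sets_image_in_sets)
    (auto intro: measurable_compose[OF measurable_vimage_algebra1[OF assms(1)] assms(2)])

lemma (in prob_space) indep_rv_compose:
  assumes "indep_rv M Ma A Mb B" and f: "f \<in> measurable Ma Mc" and g: "g \<in> measurable Mb Md"
  shows "indep_rv M Mc (\<lambda>\<omega>. f (A \<omega>)) Md (\<lambda>\<omega>. g (B \<omega>))"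
proof -
  have A: "A \<in> measurable M Ma" and B: "B \<in> measurable M Mb"
    and ind: "indep_set (sets (vimage_algebra (space M) A Ma)) (sets (vimage_algebra (space M) B Mb))"
    using assms(1) unfolding indep_rv_def by auto
  have "sets (vimage_algebra (space M) (\<lambda>\<omega>. f (A \<omega>)) Mc) \<subseteq> sets (vimage_algebra (space M) A Ma)"
    using A f by (intro sets_vimage_algebra_comp_subset) (auto simp: measurable_def)
  moreover have "sets (vimage_algebra (space M) (\<lambda>\<omega>. g (B \<omega>)) Md) \<subseteq> sets (vimage_algebra (space M) B Mb)"
    using B g by (intro sets_vimage_algebra_comp_subset) (auto simp: measurable_def)
  ultimately show ?thesis
    using ind A B f g unfolding indep_rv_def indep_sets2_eq by (auto 0 3)
qed

lemma (in prob_space) indep_var_iff_indep_rv: "indep_var Ma A Mb B \<longleftrightarrow> indep_rv M Ma A Mb B"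
  unfolding indep_var_eq indep_rv_def sets_vimage_algebra by simp

lemma (in prob_space) sums_integral_nat_valued:
  fixes h :: "nat \<Rightarrow> 'a \<Rightarrow> 'b::{banach, second_countable_topology}"
  assumes Y: "Y \<in> measurable M (count_space UNIV)"
    and h: "\<And>n. h n \<in> borel_measurable M"
    and bnd: "\<And>n \<omega>. \<omega> \<in> space M \<Longrightarrow> norm (h n \<omega>) \<le> B"
  shows "(\<lambda>n. \<integral>\<omega>. indicator {\<omega>\<in>space M. Y \<omega> = n} \<omega> *\<^sub>R h n \<omega> \<partial>M) sums (\<integral>\<omega>. h (Y \<omega>) \<omega> \<partial>M)"
proof -
  define s where "s m \<omega> = (\<Sum>n<m. indicator {\<omega>\<in>space M. Y \<omega> = n} \<omega> *\<^sub>R h n \<omega>)" for m \<omega>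
  have ev: "{\<omega>\<in>space M. Y \<omega> = n} \<in> sets M" for n
    using Y by measurable
  have B0: "0 \<le> B"
    using not_empty bnd norm_ge_zero by (meson ex_in_conv order_trans)
  have s_eq: "s m \<omega> = (if Y \<omega> < m then h (Y \<omega>) \<omega> else 0)" if "\<omega> \<in> space M" for m \<omega>
  proof -
    have "s m \<omega> = (\<Sum>n<m. if n = Y \<omega> then h n \<omega> else 0)"
      unfolding s_def using that by (intro sum.cong) (auto simp: indicator_def)
    then show ?thesis
      by (simp add: sum.delta)
  qed
  have term_int: "integrable M (\<lambda>\<omega>. indicator {\<omega>\<in>space M. Y \<omega> = n} \<omega> *\<^sub>R h n \<omega>)" for n
    using ev h bnd B0 by (intro integrable_const_bound[where B=B]) (auto simp: indicator_def)
  have "(\<lambda>m. integral\<^sup>L M (s m)) \<longlonglongrightarrow> (\<integral>\<omega>. h (Y \<omega>) \<omega> \<partial>M)"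
  proof (rule integral_dominated_convergence[where w="\<lambda>_. B"])
    show "(\<lambda>\<omega>. h (Y \<omega>) \<omega>) \<in> borel_measurable M"
      using h Y by (rule measurable_compose_countable)
    show "s m \<in> borel_measurable M" for m
      unfolding s_def using ev h by measurable
    show "AE \<omega> in M. (\<lambda>m. s m \<omega>) \<longlonglongrightarrow> h (Y \<omega>) \<omega>"
    proof (rule AE_I2)
      fix \<omega> assume "\<omega> \<in> space M"
      have "\<forall>\<^sub>F m in sequentially. s m \<omega> = h (Y \<omega>) \<omega>"
        using eventually_gt_at_top[of "Y \<omega>"] by eventually_elim (simp add: s_eq \<open>\<omega> \<in> space M\<close>)
      then show "(\<lambda>m. s m \<omega>) \<longlonglongrightarrow> h (Y \<omega>) \<omega>"
        by (rule tendsto_eventually)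
    qed
    show "AE \<omega> in M. norm (s m \<omega>) \<le> B" for m
      using B0 by (intro AE_I2) (auto simp: s_eq bnd)
  qed simp
  moreover have "integral\<^sup>L M (s m) = (\<Sum>n<m. \<integral>\<omega>. indicator {\<omega>\<in>space M. Y \<omega> = n} \<omega> *\<^sub>R h n \<omega> \<partial>M)" for m
    unfolding s_def by (rule Bochner_Integration.integral_sum) (rule term_int)
  ultimately show ?thesis
    unfolding sums_def by simp
qed

lemma (in prob_space) sums_integral_nat_valued_const:
  fixes g :: "nat \<Rightarrow> 'b::{banach, second_countable_topology}"
  assumes Y: "Y \<in> measurable M (count_space UNIV)" and bnd: "\<And>n. norm (g n) \<le> B"
  shows "(\<lambda>n. prob {\<omega>\<in>space M. Y \<omega> = n} *\<^sub>R g n) sums (\<integral>\<omega>. g (Y \<omega>) \<partial>M)"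
proof -
  have "{\<omega>\<in>space M. Y \<omega> = n} \<in> sets M" for n
    using Y by measurable
  then have "(\<integral>\<omega>. indicator {\<omega>\<in>space M. Y \<omega> = n} \<omega> *\<^sub>R g n \<partial>M) = prob {\<omega>\<in>space M. Y \<omega> = n} *\<^sub>R g n" for n
    by (subst integral_scaleR_left) (auto simp: emeasure_eq_measure intro!: integrable_real_indicator)
  with sums_integral_nat_valued[OF Y, of "\<lambda>n _. g n" B] bnd show ?thesis
    by simp
qed

text \<open>The identity theorem gives equality on the open disc; summability of the nonnegative
  coefficients makes the series continuous on the closed disc, which carries it to the boundary.\<close>
lemma power_series_eq_entire_on_cball:
  fixes p :: "nat \<Rightarrow> real" and G :: "complex \<Rightarrow> complex"
  assumes p: "\<And>n. p n \<ge> 0" "summable p" and G: "G holomorphic_on UNIV"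
    and eq: "\<And>u::real. \<bar>u\<bar> < 1 \<Longrightarrow> (\<Sum>n. of_real (p n) * of_real u ^ n) = G (of_real u)"
    and z: "norm z \<le> 1"
  shows "(\<Sum>n. of_real (p n) * z ^ n) = G z"
proof -
  define F where "F w = (\<Sum>n. of_real (p n) * w ^ n)" for w :: complex
  have "fps_conv_radius (Abs_fps (\<lambda>n. complex_of_real (p n))) \<ge> 1"
    using conv_radius_geI[of "\<lambda>n. complex_of_real (p n)" 1] p(2)
    by (simp add: fps_conv_radius_def one_ereal_def)
  then have holF: "F holomorphic_on ball 0 1"
    unfolding F_def using eball_mono[of 1 _ 0]
    by (intro holomorphic_on_eval_fps[where f="Abs_fps (\<lambda>n. complex_of_real (p n))", unfolded eval_fps_def fps_nth_Abs_fps])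
      (auto simp: one_ereal_def)
  have "uniform_limit (cball 0 1) (\<lambda>n w. \<Sum>i<n. of_real (p i) * w ^ i) F sequentially"
    unfolding F_def[abs_def]
    by (rule Weierstrass_m_test[where M=p])
      (auto simp: norm_mult norm_power p intro!: mult_left_le power_le_one)
  then have contF: "continuous_on (cball 0 1) F"
    by (intro uniform_limit_theorem[where F=sequentially]) (auto intro!: always_eventually continuous_intros)
  have limpt: "0 islimpt complex_of_real ` {-1<..<1}"
    unfolding islimpt_approachable
  proof (intro allI impI)
    fix e :: real assume "0 < e"
    then show "\<exists>x'\<in>complex_of_real ` {-1<..<1}. x' \<noteq> 0 \<and> dist x' 0 < e"
      by (intro bexI[of _ "of_real (min (e/2) (1/2))"]) (auto simp: dist_norm)
  qed
  have eqF: "F (of_real u) - G (of_real u) = 0" if "-1 < u" "u < 1" for u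
    using eq[of u] that unfolding F_def by simp
  have "F w - G w = 0" if "w \<in> ball 0 1" for w
  proof (rule analytic_continuation[where f="\<lambda>w. F w - G w" and S="ball 0 1" and U="complex_of_real ` {-1<..<1}" and \<xi>=0])
    show "(\<lambda>w. F w - G w) holomorphic_on ball 0 1"
      using holF holomorphic_on_subset[OF G] by (intro holomorphic_intros) auto
  qed (use that limpt eqF in auto)
  then have "ball 0 1 \<subseteq> {w \<in> cball 0 1. F w - G w = 0}"
    by auto
  moreover have "closed {w \<in> cball 0 1. F w - G w = 0}"
    using contF holomorphic_on_imp_continuous_on[OF G]
    by (intro continuous_closed_preimage_constant continuous_intros) (auto intro: continuous_on_subset)
  ultimately have "closure (ball 0 1) \<subseteq> {w \<in> cball 0 1. F w - G w = 0}"
    by (rule closure_minimal)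
  with z show ?thesis
    unfolding F_def by (auto simp: subset_iff)
qed

lemma (in prob_space) pgf_eq_entire_on_cball:
  fixes G :: "complex \<Rightarrow> complex"
  assumes Y: "Y \<in> measurable M (count_space UNIV)" and G: "G holomorphic_on UNIV"
    and real_eq: "\<And>u::real. \<bar>u\<bar> \<le> 1 \<Longrightarrow> of_real (\<integral>\<omega>. u ^ Y \<omega> \<partial>M) = G (of_real u)"
    and z: "norm z \<le> 1"
  shows "(\<integral>\<omega>. z ^ Y \<omega> \<partial>M) = G z"
proof -
  define p where "p n = prob {\<omega>\<in>space M. Y \<omega> = n}" for n
  have sums_C: "(\<lambda>n. of_real (p n) * w ^ n) sums (\<integral>\<omega>. w ^ Y \<omega> \<partial>M)" if "norm w \<le> 1" for w :: complex
    using sums_integral_nat_valued_const[OF Y, of "\<lambda>n. w ^ n" 1] that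
    by (simp add: p_def scaleR_conv_of_real norm_power power_le_one)
  have sums_R: "(\<lambda>n. p n * u ^ n) sums (\<integral>\<omega>. u ^ Y \<omega> \<partial>M)" if "\<bar>u\<bar> \<le> 1" for u :: real
    using sums_integral_nat_valued_const[OF Y, of "\<lambda>n. u ^ n" 1] that
    by (simp add: p_def power_abs power_le_one)
  have "(\<Sum>n. of_real (p n) * z ^ n) = G z"
  proof (rule power_series_eq_entire_on_cball[OF _ _ G _ z])
    show "summable p"
      using sums_R[of 1] by (simp add: sums_iff)
    fix u :: real assume "\<bar>u\<bar> < 1"
    then show "(\<Sum>n. of_real (p n) * of_real u ^ n) = G (of_real u)"
      using sums_of_real[OF sums_R[of u], where 'a=complex] real_eq[of u] by (simp add: sums_iff)
  qed (simp add: p_def)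
  with sums_C[OF z] show ?thesis
    by (simp add: sums_iff)
qed

definition right_riemann_mean :: "(real \<Rightarrow> 'a::real_vector) \<Rightarrow> real \<Rightarrow> nat \<Rightarrow> 'a" where
  "right_riemann_mean f t N = (1 / real N) *\<^sub>R (\<Sum>m=1..N. f (real m * t / real N))"

definition grid_ceiling :: "real \<Rightarrow> nat \<Rightarrow> real \<Rightarrow> real" where
  "grid_ceiling t N s = t * of_int \<lceil>real N * s / t\<rceil> / real N"

lemma grid_ceiling_bounds:
  assumes t: "t > 0" and N: "N > 0" and s: "s \<in> {0..t}"
  shows "s \<le> grid_ceiling t N s" and "grid_ceiling t N s \<le> s + t / real N"
    and "grid_ceiling t N s \<le> t"
proof -
  define x where "x = real N * s / t"
  have gc: "grid_ceiling t N s = t * of_int \<lceil>x\<rceil> / real N"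
    by (simp add: grid_ceiling_def x_def)
  have s_eq: "s = t * x / real N" and "x \<le> real N"
    using s t N by (auto simp: x_def field_simps)
  then have "\<lceil>x\<rceil> \<le> int N"
    by (simp add: ceiling_le_iff)
  then have "of_int \<lceil>x\<rceil> \<le> real N"
    by (metis of_int_le_iff of_int_of_nat_eq)
  have "x \<le> of_int \<lceil>x\<rceil>" and "of_int \<lceil>x\<rceil> \<le> x + 1"
    by linarith+
  have "t * x / real N \<le> t * of_int \<lceil>x\<rceil> / real N"
    using t \<open>x \<le> of_int \<lceil>x\<rceil>\<close> by (intro divide_right_mono mult_left_mono) auto
  then show "s \<le> grid_ceiling t N s"
    using gc s_eq by linarith
  have "t * of_int \<lceil>x\<rceil> / real N \<le> t * (x + 1) / real N"
    using t \<open>of_int \<lceil>x\<rceil> \<le> x + 1\<close> by (intro divide_right_mono mult_left_mono) auto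
  then show "grid_ceiling t N s \<le> s + t / real N"
    using gc s_eq by (simp add: distrib_left add_divide_distrib)
  have "t * of_int \<lceil>x\<rceil> / real N \<le> t * real N / real N"
    using t \<open>of_int \<lceil>x\<rceil> \<le> real N\<close> by (intro divide_right_mono mult_left_mono) auto
  then show "grid_ceiling t N s \<le> t"
    using gc N by simp
qed

lemma grid_ceiling_eq_sum_cells:
  fixes f :: "real \<Rightarrow> 'a::real_vector"
  assumes t: "t > 0" and N: "N > 0" and s: "s \<in> {0..t} - (\<lambda>m. real m * t / real N) ` {..N}"
  shows "f (grid_ceiling t N s)
    = (\<Sum>m=1..N. indicator {real (m - 1) * t / real N..real m * t / real N} s *\<^sub>R f (real m * t / real N))"
proof -
  define x where "x = real N * s / t"
  have "0 \<le> x" "x \<le> real N"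
    using s t N by (auto simp: x_def field_simps)
  have not_grid: "x \<noteq> real m" for m
  proof (cases "m \<le> N")
    case True
    then show ?thesis
      using s t N by (auto simp: x_def field_simps)
  qed (use \<open>x \<le> real N\<close> in auto)
  have "0 < x"
    using \<open>0 \<le> x\<close> not_grid[of 0] by simp
  with \<open>x \<le> real N\<close> have "1 \<le> \<lceil>x\<rceil>" and "\<lceil>x\<rceil> \<le> int N"
    by (simp_all add: ceiling_le_iff)
  then have c: "nat \<lceil>x\<rceil> \<in> {1..N}" "real (nat \<lceil>x\<rceil>) = of_int \<lceil>x\<rceil>"
    by (auto simp: le_nat_iff nat_le_iff)
  have cell_iff: "s \<in> {real (m - 1) * t / real N..real m * t / real N} \<longleftrightarrow> m = nat \<lceil>x\<rceil>"
    if m: "m \<in> {1..N}" for m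
  proof -
    have "s \<in> {real (m - 1) * t / real N..real m * t / real N} \<longleftrightarrow> real m - 1 \<le> x \<and> x \<le> real m"
      using t N m by (auto simp: x_def field_simps of_nat_diff)
    also have "\<dots> \<longleftrightarrow> real m - 1 < x \<and> x \<le> real m"
      using not_grid[of "m - 1"] m by (auto simp: of_nat_diff)
    also have "\<dots> \<longleftrightarrow> \<lceil>x\<rceil> = int m"
      by (simp add: ceiling_eq_iff)
    also have "\<dots> \<longleftrightarrow> m = nat \<lceil>x\<rceil>"
      using \<open>1 \<le> \<lceil>x\<rceil>\<close> by auto
    finally show ?thesis .
  qed
  have "f (grid_ceiling t N s) = f (real (nat \<lceil>x\<rceil>) * t / real N)"
    unfolding grid_ceiling_def x_def[symmetric] c(2) by (simp add: mult.commute)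
  also have "\<dots> = (\<Sum>m=1..N. if m = nat \<lceil>x\<rceil> then f (real m * t / real N) else 0)"
    using c(1) by (simp add: sum.delta)
  also have "\<dots> = (\<Sum>m=1..N. indicator {real (m - 1) * t / real N..real m * t / real N} s
                                *\<^sub>R f (real m * t / real N))"
    by (rule sum.cong[OF refl]) (use cell_iff in \<open>auto simp: indicator_def\<close>)
  finally show ?thesis .
qed

lemma has_integral_grid_ceiling:
  fixes f :: "real \<Rightarrow> 'a::euclidean_space"
  assumes t: "t > 0" and N: "N > 0"
  shows "((\<lambda>s. f (grid_ceiling t N s)) has_integral t *\<^sub>R right_riemann_mean f t N) {0..t}"
proof -
  define b where "b m = real m * t / real N" for m :: nat
  define cell where "cell m = {b (m - 1)..b m}" for m :: nat
  have cell_int: "((\<lambda>s. indicator (cell m) s *\<^sub>R f (b m)) has_integral (t / real N) *\<^sub>R f (b m)) {0..t}"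
    if m: "m \<in> {1..N}" for m
  proof -
    have "b m - b (m - 1) = t / real N"
      using m N by (simp add: b_def of_nat_diff field_simps)
    moreover have "0 \<le> b (m - 1)" and "b m \<le> t"
      using m t N by (simp_all add: b_def field_simps)
    moreover have "0 < t / real N"
      using t N by simp
    ultimately have "b (m - 1) \<le> b m" and "cell m \<subseteq> {0..t}"
      by (auto simp: cell_def)
    then have "((\<lambda>s. f (b m)) has_integral (t / real N) *\<^sub>R f (b m)) (cell m)"
      using has_integral_const_real[of "f (b m)" "b (m - 1)" "b m"] \<open>b m - b (m - 1) = t / real N\<close>
      by (simp add: cell_def)
    then have "((\<lambda>s. if s \<in> cell m then f (b m) else 0) has_integral (t / real N) *\<^sub>R f (b m)) {0..t}"
      using \<open>cell m \<subseteq> {0..t}\<close>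
        has_integral_restrict_closed_subinterval[of "\<lambda>s. f (b m)" _ "b (m - 1)" "b m" 0 t]
      by (simp add: cell_def)
    then show ?thesis
      by (simp add: indicator_scaleR_eq_if[of "cell m" _ "\<lambda>_. f (b m)"])
  qed
  have step_int: "((\<lambda>s. \<Sum>m=1..N. indicator (cell m) s *\<^sub>R f (b m)) has_integral t *\<^sub>R right_riemann_mean f t N) {0..t}"
    using has_integral_sum[of "{1..N}", OF _ cell_int] t N
    by (simp add: right_riemann_mean_def scaleR_sum_right b_def)
  show ?thesis
  proof (rule has_integral_spike_finite[OF _ _ step_int])
    fix s assume "s \<in> {0..t} - b ` {..N}"
    then have "s \<in> {0..t} - (\<lambda>m. real m * t / real N) ` {..N}"
      by (simp add: b_def[abs_def])
    from grid_ceiling_eq_sum_cells[OF t N this]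
    show "f (grid_ceiling t N s) = (\<Sum>m=1..N. indicator (cell m) s *\<^sub>R f (b m))"
      by (simp only: b_def cell_def)
  qed simp
qed

text \<open>The mean is the integral of \<open>f\<close> sampled at \<open>grid_ceiling\<close>, which approaches each point
  from the right; dominated convergence finishes.\<close>
lemma right_riemann_mean_tendsto:
  fixes f :: "real \<Rightarrow> 'a::euclidean_space"
  assumes t: "t > 0"
    and right_cont: "\<And>s. s \<in> {0..t} \<Longrightarrow> (f \<longlongrightarrow> f s) (at_right s)"
    and bnd: "\<And>s. s \<in> {0..t} \<Longrightarrow> norm (f s) \<le> B"
  shows "(\<lambda>N. right_riemann_mean f t N) \<longlonglongrightarrow> (1 / t) *\<^sub>R integral {0..t} f"
proof -
  define g where "g n s = f (grid_ceiling t (Suc n) s)" for n s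
  have g_int: "(g n has_integral t *\<^sub>R right_riemann_mean f t (Suc n)) {0..t}" for n
    unfolding g_def using t by (intro has_integral_grid_ceiling) auto
  have g_bnd: "norm (g n s) \<le> B" if "s \<in> {0..t}" for n s
    using grid_ceiling_bounds[OF t _ that, of "Suc n"] that unfolding g_def by (intro bnd) auto
  have g_lim: "(\<lambda>n. g n s) \<longlonglongrightarrow> f s" if s: "s \<in> {0..t}" for s
  proof -
    have lower: "grid_ceiling t (Suc n) s \<in> {s..}" for n
      using grid_ceiling_bounds(1)[OF t _ s, of "Suc n"] by simp
    have upper: "grid_ceiling t (Suc n) s \<le> s + t / real (Suc n)" for n
      by (rule grid_ceiling_bounds(2)[OF t _ s]) simp
    have "(\<lambda>n. s + t / real (Suc n)) \<longlonglongrightarrow> s"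
      using tendsto_add[OF tendsto_const[of s] LIMSEQ_Suc[OF lim_const_over_n[of t]]] by simp
    then have conv: "(\<lambda>n. grid_ceiling t (Suc n) s) \<longlonglongrightarrow> s"
      using lower upper by (rule_tac real_tendsto_sandwich[OF always_eventually always_eventually tendsto_const]) auto
    have "continuous (at s within {s..}) f"
      using right_cont[OF s] by (simp add: continuous_within at_within_Ici_at_right)
    then show ?thesis
      unfolding g_def by (rule continuous_within_tendsto_compose'[OF _ lower conv])
  qed
  have "(\<lambda>n. integral {0..t} (g n)) \<longlonglongrightarrow> integral {0..t} f"
    using g_int by (intro dominated_convergence(2)[OF _ _ g_bnd g_lim]) auto
  then have "(\<lambda>n. (1 / t) *\<^sub>R integral {0..t} (g n)) \<longlonglongrightarrow> (1 / t) *\<^sub>R integral {0..t} f"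
    by (rule tendsto_scaleR[OF tendsto_const])
  moreover have "(1 / t) *\<^sub>R integral {0..t} (g n) = right_riemann_mean f t (Suc n)" for n
    using integral_unique[OF g_int] t by simp
  ultimately show ?thesis
    by (simp add: filterlim_sequentially_Suc[symmetric, of "\<lambda>N. right_riemann_mean f t N"])
qed

lemma cadlag_path_diff:
  "cadlag_path p \<Longrightarrow> cadlag_path q \<Longrightarrow> cadlag_path (\<lambda>s. p s - q s)"
  unfolding cadlag_path_def by (blast intro: tendsto_diff)

lemma cadlag_path_locally_bounded:
  assumes "cadlag_path p" and "s \<ge> 0"
  obtains d b where "d > 0" and "\<And>y. y \<ge> 0 \<Longrightarrow> \<bar>y - s\<bar> < d \<Longrightarrow> \<bar>p y\<bar> \<le> b"
proof -
  have "\<forall>\<^sub>F y in at_right s. \<bar>p y - p s\<bar> < 1"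
    using assms unfolding cadlag_path_def by (auto simp: tendsto_iff dist_real_def)
  then obtain r where r: "r > s" "\<And>y. s < y \<Longrightarrow> y < r \<Longrightarrow> \<bar>p y\<bar> \<le> \<bar>p s\<bar> + 1"
    unfolding eventually_at_right_field by fastforce
  obtain r' c where l: "r' < s" "\<And>y. r' < y \<Longrightarrow> y < s \<Longrightarrow> 0 \<le> y \<Longrightarrow> \<bar>p y\<bar> \<le> c"
  proof (cases "s > 0")
    case True
    then obtain l where "(p \<longlongrightarrow> l) (at_left s)"
      using assms unfolding cadlag_path_def by blast
    then have "\<forall>\<^sub>F y in at_left s. \<bar>p y - l\<bar> < 1"
      by (auto simp: tendsto_iff dist_real_def)
    then obtain r' where "r' < s" "\<And>y. r' < y \<Longrightarrow> y < s \<Longrightarrow> \<bar>p y - l\<bar> < 1"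
      unfolding eventually_at_left_field by blast
    then show ?thesis
      by (intro that[of r' "\<bar>l\<bar> + 1"]) force+
  next
    case False
    then show ?thesis
      using \<open>s \<ge> 0\<close> by (intro that[of "s - 1" 0]) auto
  qed
  show ?thesis
  proof (rule that[of "min (r - s) (s - r')" "max (\<bar>p s\<bar> + 1) c"])
    fix y assume "y \<ge> 0" "\<bar>y - s\<bar> < min (r - s) (s - r')"
    then show "\<bar>p y\<bar> \<le> max (\<bar>p s\<bar> + 1) c"
      using r(2)[of y] l(2)[of y] by (cases y s rule: linorder_cases) auto
  qed (use r l in auto)
qed

lemma cadlag_path_bounded:
  assumes "cadlag_path p"
  obtains B where "\<And>s. s \<in> {0..t} \<Longrightarrow> \<bar>p s\<bar> \<le> B"
proof -
  have "\<forall>s\<in>{0..t}. \<exists>d>0. \<exists>b. \<forall>y. y \<ge> 0 \<and> \<bar>y - s\<bar> < d \<longrightarrow> \<bar>p y\<bar> \<le> b"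
    using cadlag_path_locally_bounded[OF assms] by (metis atLeastAtMost_iff)
  then obtain d b where d: "\<And>s. s \<in> {0..t} \<Longrightarrow> d s > 0"
    and b: "\<And>s y. s \<in> {0..t} \<Longrightarrow> y \<ge> 0 \<Longrightarrow> \<bar>y - s\<bar> < d s \<Longrightarrow> \<bar>p y\<bar> \<le> b s"
    by metis
  have cover: "{0..t} \<subseteq> (\<Union>s\<in>{0..t}. ball s (d s))"
    using d by force
  obtain C where C: "C \<subseteq> {0..t}" "finite C" "{0..t} \<subseteq> (\<Union>s\<in>C. ball s (d s))"
    by (rule compactE_image[OF compact_Icc _ cover]) auto
  show ?thesis
  proof (rule that)
    fix y assume y: "y \<in> {0..t}"
    then obtain s where s: "s \<in> C" "y \<in> ball s (d s)"
      using C(3) by blast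
    then have "\<bar>p y\<bar> \<le> b s"
      using b[of s y] C(1) y by (auto simp: dist_real_def)
    also have "\<dots> \<le> Max (b ` C)"
      using C(2) s(1) by (intro Max_ge) auto
    finally show "\<bar>p y\<bar> \<le> Max (b ` C)" .
  qed
qed

lemma cadlag_right_riemann_mean_tendsto:
  assumes "cadlag_path p" and "t > 0"
  shows "(\<lambda>N. right_riemann_mean p t N) \<longlonglongrightarrow> (1 / t) * integral {0..t} p"
proof -
  obtain B where "\<And>s. s \<in> {0..t} \<Longrightarrow> \<bar>p s\<bar> \<le> B"
    using cadlag_path_bounded[OF assms(1)] by blast
  with assms show ?thesis
    using right_riemann_mean_tendsto[of t p B] unfolding cadlag_path_def by auto
qed

lemma GCP_prob_space: "is_GCP M k lam X \<Longrightarrow> prob_space M"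
  unfolding is_GCP_def by simp

lemma GCP_measurable: "is_GCP M k lam X \<Longrightarrow> t \<ge> 0 \<Longrightarrow> X t \<in> measurable M (count_space UNIV)"
  unfolding is_GCP_def by simp

lemma GCP_borel_measurable:
  "is_GCP M k lam X \<Longrightarrow> t \<ge> 0 \<Longrightarrow> (\<lambda>\<omega>. real (X t \<omega>)) \<in> borel_measurable M"
  by (rule measurable_compose[OF GCP_measurable]) auto

lemma
  assumes "is_GCP M k lam X"
  shows GCP_rate_nonneg: "j \<in> {1..k} \<Longrightarrow> lam j \<ge> 0"
    and GCP_zero: "\<omega> \<in> space M \<Longrightarrow> X 0 \<omega> = 0"
    and GCP_cadlag: "\<omega> \<in> space M \<Longrightarrow> cadlag_path (\<lambda>s. real (X s \<omega>))"
    and GCP_indep_increments: "0 \<le> \<tau> 0 \<Longrightarrow> (\<And>i. \<tau> i \<le> \<tau> (Suc i)) \<Longrightarrow>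
      prob_space.indep_vars M (\<lambda>_. borel) (\<lambda>i \<omega>. real (X (\<tau> (Suc i)) \<omega>) - real (X (\<tau> i) \<omega>)) {..<n}"
    and GCP_stationary: "0 \<le> s \<Longrightarrow> 0 \<le> h \<Longrightarrow>
      distr M borel (\<lambda>\<omega>. real (X (s + h) \<omega>) - real (X s \<omega>)) = distr M borel (\<lambda>\<omega>. real (X h \<omega>))"
    and GCP_pgf_real: "0 \<le> h \<Longrightarrow> \<bar>u\<bar> \<le> 1 \<Longrightarrow>
      (\<integral>\<omega>. u ^ X h \<omega> \<partial>M) = exp (h * (\<Sum>j=1..k. lam j * (u ^ j - 1)))"
  using assms unfolding is_GCP_def by simp_all

lemma GCP_pgf:
  fixes z :: complex
  assumes G: "is_GCP M k lam X" and h: "h \<ge> 0" and z: "norm z \<le> 1"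
  shows "(\<integral>\<omega>. z ^ X h \<omega> \<partial>M) = exp (of_real h * (\<Sum>j=1..k. of_real (lam j) * (z ^ j - 1)))"
proof (rule prob_space.pgf_eq_entire_on_cball[OF GCP_prob_space[OF G] GCP_measurable[OF G h] _ _ z])
  show "(\<lambda>z. exp (of_real h * (\<Sum>j=1..k. of_real (lam j) * (z ^ j - 1)))) holomorphic_on UNIV"
    by (intro holomorphic_intros)
  fix u :: real assume "\<bar>u\<bar> \<le> 1"
  then have "(\<integral>\<omega>. u ^ X h \<omega> \<partial>M) = exp (h * (\<Sum>j=1..k. lam j * (u ^ j - 1)))"
    by (rule GCP_pgf_real[OF G h])
  then show "of_real (\<integral>\<omega>. u ^ X h \<omega> \<partial>M)
      = exp (of_real h * (\<Sum>j=1..k. of_real (lam j) * (of_real u ^ j - 1)))"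
    by (simp flip: exp_of_real)
qed

lemma iexp_mult_of_nat: "iexp (a * real n) = iexp a ^ n"
  by (metis exp_of_nat_mult mult.assoc mult.commute of_real_mult of_real_of_nat_eq)

text \<open>Stationarity reduces an increment to \<open>X h\<close>, whose characteristic function is the
  generating function evaluated on the unit circle.\<close>
lemma GCP_increment_char:
  assumes G: "is_GCP M k lam X" and s: "s \<ge> 0" and h: "h \<ge> 0"
  shows "(\<integral>\<omega>. iexp (\<theta> * (real (X (s + h) \<omega>) - real (X s \<omega>))) \<partial>M)
       = exp (of_real h * (\<Sum>j=1..k. of_real (lam j) * (iexp (\<theta> * real j) - 1)))"
proof -
  have incr: "(\<lambda>\<omega>. real (X (s + h) \<omega>) - real (X s \<omega>)) \<in> borel_measurable M"
    using GCP_borel_measurable[OF G] s h by simp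
  have "(\<integral>\<omega>. iexp (\<theta> * (real (X (s + h) \<omega>) - real (X s \<omega>))) \<partial>M)
      = (\<integral>x. iexp (\<theta> * x) \<partial>distr M borel (\<lambda>\<omega>. real (X (s + h) \<omega>) - real (X s \<omega>)))"
    using incr by (rule integral_distr[symmetric]) simp
  also have "\<dots> = (\<integral>x. iexp (\<theta> * x) \<partial>distr M borel (\<lambda>\<omega>. real (X h \<omega>)))"
    by (simp only: GCP_stationary[OF G s h])
  also have "\<dots> = (\<integral>\<omega>. iexp (\<theta> * real (X h \<omega>)) \<partial>M)"
    using GCP_borel_measurable[OF G h] by (rule integral_distr) simp
  also have "\<dots> = (\<integral>\<omega>. iexp \<theta> ^ X h \<omega> \<partial>M)"
    by (simp only: iexp_mult_of_nat)
  also have "\<dots> = exp (of_real h * (\<Sum>j=1..k. of_real (lam j) * (iexp (\<theta> * real j) - 1)))"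
    using GCP_pgf[OF G h, of "iexp \<theta>"] by (simp only: iexp_mult_of_nat) simp
  finally show ?thesis .
qed

lemma iexp_sum: "finite A \<Longrightarrow> iexp (\<Sum>i\<in>A. f i) = (\<Prod>i\<in>A. iexp (f i))"
  by (simp add: sum_distrib_left exp_sum)

lemma sum_partial_sums:
  fixes d :: "nat \<Rightarrow> 'a::comm_ring_1"
  shows "(\<Sum>m=1..N. \<Sum>i<m. d i) = (\<Sum>i<N. (of_nat N - of_nat i) * d i)"
  by (induction N) (simp_all add: algebra_simps sum.distrib sum_subtractf)

lemma right_riemann_mean_eq_weighted_increments:
  fixes p :: "real \<Rightarrow> real"
  assumes "p 0 = 0"
  shows "right_riemann_mean p t N
    = (\<Sum>i<N. (real N - real i) / real N * (p (real (Suc i) * t / real N) - p (real i * t / real N)))"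
proof -
  define d where "d i = p (real (Suc i) * t / real N) - p (real i * t / real N)" for i
  have "(\<Sum>i<m. d i) = p (real m * t / real N) - p (real 0 * t / real N)" for m
    unfolding d_def by (rule sum_lessThan_telescope)
  then have p_eq: "p (real m * t / real N) = (\<Sum>i<m. d i)" for m
    using assms by simp
  show ?thesis
    unfolding right_riemann_mean_def p_eq sum_partial_sums
    by (simp add: d_def sum_distrib_left)
qed

text \<open>Independence of the increments factorises the characteristic function into those of
  single increments, which are known from the generating function.\<close>
lemma GCP_right_riemann_mean_char:
  assumes G: "is_GCP M k lam X" and t: "t > 0" and N: "N > 0"
  shows "(\<integral>\<omega>. iexp (\<theta> * right_riemann_mean (\<lambda>s. real (X s \<omega>)) t N) \<partial>M)
       = exp (of_real t * (\<Sum>j=1..k. of_real (lam j) * (right_riemann_mean (\<lambda>x. iexp (\<theta> * x)) (real j) N - 1)))"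
proof -
  interpret prob_space M
    using GCP_prob_space[OF G] .
  define \<tau> where "\<tau> i = real i * t / real N" for i
  define d where "d i \<omega> = real (X (\<tau> (Suc i)) \<omega>) - real (X (\<tau> i) \<omega>)" for i \<omega>
  define c where "c i = (real N - real i) / real N" for i
  define F where "F m = (\<Sum>j=1..k. of_real (lam j) * (iexp (\<theta> * (real m * real j / real N)) - 1))" for m
  have \<tau>_nonneg: "\<tau> i \<ge> 0" and \<tau>_Suc: "\<tau> (Suc i) = \<tau> i + t / real N" for i
    using t by (simp_all add: \<tau>_def add_divide_distrib distrib_right)
  then have \<tau>_mono: "\<tau> i \<le> \<tau> (Suc i)" for i
    using t by simp
  have d_measurable: "d i \<in> borel_measurable M" for i
    unfolding d_def using GCP_borel_measurable[OF G \<tau>_nonneg] by measurable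
  have "indep_vars (\<lambda>_. borel) d {..<N}"
    unfolding d_def using \<tau>_nonneg \<tau>_mono by (rule GCP_indep_increments[OF G])
  then have indep: "indep_vars (\<lambda>_. borel) (\<lambda>i \<omega>. iexp (\<theta> * c i * d i \<omega>)) {..<N}"
    by (rule indep_vars_compose2[where Y="\<lambda>i x. iexp (\<theta> * c i * x)"]) measurable
  have mean_eq: "right_riemann_mean (\<lambda>s. real (X s \<omega>)) t N = (\<Sum>i<N. c i * d i \<omega>)"
    if "\<omega> \<in> space M" for \<omega>
    using right_riemann_mean_eq_weighted_increments[of "\<lambda>s. real (X s \<omega>)" t N] GCP_zero[OF G that]
    by (simp add: c_def d_def \<tau>_def)
  have "(\<integral>\<omega>. iexp (\<theta> * right_riemann_mean (\<lambda>s. real (X s \<omega>)) t N) \<partial>M)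
      = (\<integral>\<omega>. (\<Prod>i<N. iexp (\<theta> * c i * d i \<omega>)) \<partial>M)"
    by (intro Bochner_Integration.integral_cong)
      (simp_all only: mean_eq sum_distrib_left mult.assoc iexp_sum[OF finite_lessThan])
  also have "\<dots> = (\<Prod>i<N. \<integral>\<omega>. iexp (\<theta> * c i * d i \<omega>) \<partial>M)"
    using indep d_measurable by (intro indep_vars_lebesgue_integral integrable_iexp) auto
  also have "\<dots> = (\<Prod>i<N. exp (of_real (t / real N) * F (N - i)))"
  proof (rule prod.cong)
    fix i assume "i \<in> {..<N}"
    then have "\<theta> * c i * real j = \<theta> * (real (N - i) * real j / real N)" for j
      using N by (simp add: c_def of_nat_diff)
    then show "(\<integral>\<omega>. iexp (\<theta> * c i * d i \<omega>) \<partial>M) = exp (of_real (t / real N) * F (N - i))"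
      using GCP_increment_char[OF G \<tau>_nonneg, of "t / real N" "\<theta> * c i"] t
      by (simp add: d_def \<tau>_Suc F_def mult.assoc)
  qed simp
  also have "\<dots> = exp (of_real (t / real N) * (\<Sum>m=1..N. F m))"
  proof -
    have "(\<Sum>i<N. F (N - i)) = (\<Sum>m=1..N. F m)"
      by (rule sum.reindex_bij_witness[where i="\<lambda>m. N - m" and j="\<lambda>i. N - i"]) auto
    then show ?thesis
      by (simp only: exp_sum[OF finite_lessThan, symmetric] sum_distrib_left[symmetric])
  qed
  also have "(\<Sum>m=1..N. F m)
      = (\<Sum>j=1..k. of_real (lam j) * ((\<Sum>m=1..N. iexp (\<theta> * (real m * real j / real N))) - of_nat N))"
    unfolding F_def by (subst sum.swap) (simp add: sum_distrib_left[symmetric] sum_subtractf)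
  also have "of_real (t / real N) * \<dots>
      = of_real t * (\<Sum>j=1..k. of_real (lam j) * (right_riemann_mean (\<lambda>x. iexp (\<theta> * x)) (real j) N - 1))"
    unfolding sum_distrib_left right_riemann_mean_def
    using N by (intro sum.cong) (simp_all add: scaleR_conv_of_real field_simps)
  finally show ?thesis .
qed

definition unif_char :: "real \<Rightarrow> real \<Rightarrow> complex" where
  "unif_char c \<theta> = (1 / c) *\<^sub>R integral {0..c} (\<lambda>x. iexp (\<theta> * x))"

lemma right_riemann_mean_iexp_tendsto:
  "c > 0 \<Longrightarrow> (\<lambda>N. right_riemann_mean (\<lambda>x. iexp (\<theta> * x)) c N) \<longlonglongrightarrow> unif_char c \<theta>"
  unfolding unif_char_def by (rule right_riemann_mean_tendsto[where B=1]) (auto intro!: tendsto_intros)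

lemma GCP_right_riemann_mean_char_tendsto:
  assumes G: "is_GCP M k lam X" and t: "t > 0"
  shows "(\<lambda>N. \<integral>\<omega>. iexp (\<theta> * right_riemann_mean (\<lambda>s. real (X s \<omega>)) t N) \<partial>M)
     \<longlonglongrightarrow> exp (of_real t * (\<Sum>j=1..k. of_real (lam j) * (unif_char (real j) \<theta> - 1)))"
proof (rule Lim_transform_eventually)
  show "(\<lambda>N. exp (of_real t * (\<Sum>j=1..k. of_real (lam j) * (right_riemann_mean (\<lambda>x. iexp (\<theta> * x)) (real j) N - 1))))
     \<longlonglongrightarrow> exp (of_real t * (\<Sum>j=1..k. of_real (lam j) * (unif_char (real j) \<theta> - 1)))"
    by (intro tendsto_intros right_riemann_mean_iexp_tendsto) auto
  show "\<forall>\<^sub>F N in sequentially.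
      exp (of_real t * (\<Sum>j=1..k. of_real (lam j) * (right_riemann_mean (\<lambda>x. iexp (\<theta> * x)) (real j) N - 1)))
      = (\<integral>\<omega>. iexp (\<theta> * right_riemann_mean (\<lambda>s. real (X s \<omega>)) t N) \<partial>M)"
    using eventually_gt_at_top[of 0] by eventually_elim (rule GCP_right_riemann_mean_char[OF G t, symmetric])
qed

lemma right_riemann_mean_diff:
  "right_riemann_mean (\<lambda>s. f s - g s) t N = right_riemann_mean f t N - right_riemann_mean g t N"
  by (simp add: right_riemann_mean_def sum_subtractf scaleR_diff_right)

lemma right_riemann_mean_path_of:
  assumes "t \<ge> 0"
  shows "right_riemann_mean (\<lambda>s. real (path_of X \<omega> s)) t N = right_riemann_mean (\<lambda>s. real (X s \<omega>)) t N"
  unfolding right_riemann_mean_def path_of_def using assms by (intro arg_cong[where f="scaleR _"] sum.cong) auto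

lemma measurable_right_riemann_mean_path:
  assumes "t \<ge> 0"
  shows "(\<lambda>p. right_riemann_mean (\<lambda>s. real (p s)) t N)
    \<in> borel_measurable (Pi\<^sub>M {0..} (\<lambda>_. count_space (UNIV::nat set)))"
proof -
  have "(\<lambda>p. real (p (real m * t / real N))) \<in> borel_measurable (Pi\<^sub>M {0..} (\<lambda>_. count_space UNIV))" for m
    by (rule measurable_compose[OF measurable_component_singleton])
      (use assms in \<open>auto intro!: divide_nonneg_nonneg\<close>)
  then show ?thesis
    unfolding right_riemann_mean_def by measurable
qed

lemma GCP_right_riemann_mean_measurable:
  assumes "is_GCP M k lam X" and "t \<ge> 0"
  shows "(\<lambda>\<omega>. right_riemann_mean (\<lambda>s. real (X s \<omega>)) t N) \<in> borel_measurable M"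
proof -
  have "real m * t / real N \<ge> 0" for m
    using assms(2) by (auto intro!: divide_nonneg_nonneg)
  then show ?thesis
    unfolding right_riemann_mean_def using GCP_borel_measurable[OF assms(1)] by measurable
qed

lemma (in prob_space) integral_iexp_tendsto:
  assumes "\<And>n. R n \<in> borel_measurable M" and "Z \<in> borel_measurable M"
    and "\<And>\<omega>. \<omega> \<in> space M \<Longrightarrow> (\<lambda>n. R n \<omega>) \<longlonglongrightarrow> Z \<omega>"
  shows "(\<lambda>n. \<integral>\<omega>. iexp (\<theta> * R n \<omega>) \<partial>M) \<longlonglongrightarrow> (\<integral>\<omega>. iexp (\<theta> * Z \<omega>) \<partial>M)"
proof (rule integral_dominated_convergence[where w="\<lambda>_. 1"])
  show "AE \<omega> in M. (\<lambda>n. iexp (\<theta> * R n \<omega>)) \<longlonglongrightarrow> iexp (\<theta> * Z \<omega>)"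
    using assms(3) by (intro AE_I2) (auto intro!: tendsto_intros)
  show "(\<lambda>\<omega>. iexp (\<theta> * Z \<omega>)) \<in> borel_measurable M"
    using assms(2) by measurable
  show "(\<lambda>\<omega>. iexp (\<theta> * R n \<omega>)) \<in> borel_measurable M" for n
    using assms(1) by measurable
qed simp_all

lemma GSP_right_riemann_mean_tendsto:
  assumes gsp: "is_GSP_pair M k lam mu M1 M2" and t: "t > 0" and \<omega>: "\<omega> \<in> space M"
  shows "(\<lambda>N. right_riemann_mean (\<lambda>s. real (M1 s \<omega>)) t N - right_riemann_mean (\<lambda>s. real (M2 s \<omega>)) t N)
    \<longlonglongrightarrow> time_avg (GSP M1 M2) t \<omega>"
proof -
  have "cadlag_path (\<lambda>s. real (M1 s \<omega>))" and "cadlag_path (\<lambda>s. real (M2 s \<omega>))"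
    using gsp \<omega> by (auto simp: is_GSP_pair_def intro: GCP_cadlag)
  from cadlag_right_riemann_mean_tendsto[OF cadlag_path_diff[OF this] t] show ?thesis
    by (simp add: time_avg_def GSP_def right_riemann_mean_diff)
qed

lemma GSP_time_avg_measurable:
  assumes gsp: "is_GSP_pair M k lam mu M1 M2" and t: "t > 0"
  shows "time_avg (GSP M1 M2) t \<in> borel_measurable M"
proof (rule borel_measurable_LIMSEQ_metric)
  have "is_GCP M k lam M1" and "is_GCP M k mu M2"
    using gsp by (auto simp: is_GSP_pair_def)
  then show "(\<lambda>\<omega>. right_riemann_mean (\<lambda>s. real (M1 s \<omega>)) t N - right_riemann_mean (\<lambda>s. real (M2 s \<omega>)) t N)
      \<in> borel_measurable M" for N
    using t by (intro borel_measurable_diff GCP_right_riemann_mean_measurable) auto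
qed (rule GSP_right_riemann_mean_tendsto[OF gsp t])

lemma GSP_right_riemann_mean_char_mult:
  assumes gsp: "is_GSP_pair M k lam mu M1 M2" and t: "t \<ge> 0"
  shows "(\<integral>\<omega>. iexp (\<theta> * (right_riemann_mean (\<lambda>s. real (M1 s \<omega>)) t N
                                - right_riemann_mean (\<lambda>s. real (M2 s \<omega>)) t N)) \<partial>M)
    = (\<integral>\<omega>. iexp (\<theta> * right_riemann_mean (\<lambda>s. real (M1 s \<omega>)) t N) \<partial>M)
      * (\<integral>\<omega>. iexp (-\<theta> * right_riemann_mean (\<lambda>s. real (M2 s \<omega>)) t N) \<partial>M)"
proof -
  have G1: "is_GCP M k lam M1" and G2: "is_GCP M k mu M2"
    and ind: "indep_rv M (Pi\<^sub>M {0..} (\<lambda>_. count_space UNIV)) (path_of M1)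
                        (Pi\<^sub>M {0..} (\<lambda>_. count_space UNIV)) (path_of M2)"
    using gsp unfolding is_GSP_pair_def by auto
  interpret prob_space M
    using GCP_prob_space[OF G1] .
  define S where "S X \<omega> = right_riemann_mean (\<lambda>s. real (X s \<omega>)) t N" for X :: "real \<Rightarrow> 'a \<Rightarrow> nat" and \<omega>
  have path_fun: "(\<lambda>p. iexp (a * right_riemann_mean (\<lambda>s. real (p s)) t N))
      \<in> borel_measurable (Pi\<^sub>M {0..} (\<lambda>_. count_space UNIV))" for a
    using measurable_right_riemann_mean_path[OF t, of N] by simp
  have "indep_rv M borel (\<lambda>\<omega>. iexp (\<theta> * right_riemann_mean (\<lambda>s. real (path_of M1 \<omega> s)) t N))
                    borel (\<lambda>\<omega>. iexp (-\<theta> * right_riemann_mean (\<lambda>s. real (path_of M2 \<omega> s)) t N))"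
    by (rule indep_rv_compose[OF ind path_fun path_fun])
  then have "indep_var borel (\<lambda>\<omega>. iexp (\<theta> * S M1 \<omega>)) borel (\<lambda>\<omega>. iexp (-\<theta> * S M2 \<omega>))"
    using t by (simp add: indep_var_iff_indep_rv right_riemann_mean_path_of S_def)
  moreover have "S M1 \<in> borel_measurable M" and "S M2 \<in> borel_measurable M"
    unfolding S_def using t by (simp_all add: GCP_right_riemann_mean_measurable[OF G1]
      GCP_right_riemann_mean_measurable[OF G2])
  ultimately have "(\<integral>\<omega>. iexp (\<theta> * S M1 \<omega>) * iexp (-\<theta> * S M2 \<omega>) \<partial>M)
      = (\<integral>\<omega>. iexp (\<theta> * S M1 \<omega>) \<partial>M) * (\<integral>\<omega>. iexp (-\<theta> * S M2 \<omega>) \<partial>M)"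
    by (intro indep_var_lebesgue_integral integrable_iexp) auto
  then show ?thesis
    unfolding S_def by (simp add: algebra_simps flip: exp_add)
qed

text \<open>The right Riemann means of the two independent paths converge to the time average,
  and their characteristic functions factorise into those of the two counting processes.\<close>
lemma GSP_time_avg_char:
  assumes gsp: "is_GSP_pair M k lam mu M1 M2" and t: "t > 0"
  shows "char (distr M borel (time_avg (GSP M1 M2) t)) \<theta>
       = exp (of_real t * ((\<Sum>j=1..k. of_real (lam j) * (unif_char (real j) \<theta> - 1))
                        + (\<Sum>j=1..k. of_real (mu j) * (unif_char (real j) (-\<theta>) - 1))))"
proof -
  have G1: "is_GCP M k lam M1" and G2: "is_GCP M k mu M2"
    using gsp unfolding is_GSP_pair_def by auto
  interpret prob_space M
    using GCP_prob_space[OF G1] .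
  define R where "R N \<omega> = right_riemann_mean (\<lambda>s. real (M1 s \<omega>)) t N
                          - right_riemann_mean (\<lambda>s. real (M2 s \<omega>)) t N" for N \<omega>
  have "(\<lambda>N. \<integral>\<omega>. iexp (\<theta> * R N \<omega>) \<partial>M) \<longlonglongrightarrow> (\<integral>\<omega>. iexp (\<theta> * time_avg (GSP M1 M2) t \<omega>) \<partial>M)"
    using G1 G2 t GSP_time_avg_measurable[OF gsp t] GSP_right_riemann_mean_tendsto[OF gsp t]
    unfolding R_def by (intro integral_iexp_tendsto borel_measurable_diff GCP_right_riemann_mean_measurable) auto
  moreover have "(\<lambda>N. \<integral>\<omega>. iexp (\<theta> * R N \<omega>) \<partial>M)
     \<longlonglongrightarrow> exp (of_real t * (\<Sum>j=1..k. of_real (lam j) * (unif_char (real j) \<theta> - 1)))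
       * exp (of_real t * (\<Sum>j=1..k. of_real (mu j) * (unif_char (real j) (-\<theta>) - 1)))"
    unfolding R_def GSP_right_riemann_mean_char_mult[OF gsp less_imp_le[OF t]]
    by (intro tendsto_mult GCP_right_riemann_mean_char_tendsto G1 G2 t)
  ultimately have "(\<integral>\<omega>. iexp (\<theta> * time_avg (GSP M1 M2) t \<omega>) \<partial>M)
      = exp (of_real t * (\<Sum>j=1..k. of_real (lam j) * (unif_char (real j) \<theta> - 1)))
        * exp (of_real t * (\<Sum>j=1..k. of_real (mu j) * (unif_char (real j) (-\<theta>) - 1)))"
    by (rule LIMSEQ_unique)
  then show ?thesis
    using GSP_time_avg_measurable[OF gsp t] unfolding char_def
    by (simp add: integral_distr distrib_left exp_add)
qed

lemma (in prob_space) integral_indicator_indep: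
  fixes g :: "'b \<Rightarrow> complex"
  assumes ind: "indep_rv M (count_space UNIV) Y Mb Z"
    and g: "g \<in> borel_measurable Mb" and bnd: "\<And>x. norm (g x) \<le> C"
  shows "(\<integral>\<omega>. indicator {\<omega>\<in>space M. Y \<omega> = n} \<omega> *\<^sub>R g (Z \<omega>) \<partial>M)
    = prob {\<omega>\<in>space M. Y \<omega> = n} *\<^sub>R (\<integral>\<omega>. g (Z \<omega>) \<partial>M)"
proof -
  define Yn :: "'a \<Rightarrow> complex" where "Yn \<omega> = of_bool (Y \<omega> = n)" for \<omega>
  have Y: "Y \<in> measurable M (count_space UNIV)" and Z: "Z \<in> measurable M Mb"
    using ind unfolding indep_rv_def by auto
  have "indep_rv M borel Yn borel (\<lambda>\<omega>. g (Z \<omega>))"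
    unfolding Yn_def by (rule indep_rv_compose[OF ind _ g]) simp
  moreover have "Yn \<in> borel_measurable M"
    unfolding Yn_def using Y by measurable
  then have "integrable M Yn" and "integrable M (\<lambda>\<omega>. g (Z \<omega>))"
    using Z g bnd by (auto intro!: integrable_const_bound simp: Yn_def)
  ultimately have indep_prod: "(\<integral>\<omega>. Yn \<omega> * g (Z \<omega>) \<partial>M) = (\<integral>\<omega>. Yn \<omega> \<partial>M) * (\<integral>\<omega>. g (Z \<omega>) \<partial>M)"
    by (intro indep_var_lebesgue_integral) (simp_all add: indep_var_iff_indep_rv)
  have "{\<omega>\<in>space M. Y \<omega> = n} \<in> sets M"
    using Y by measurable
  then have "(\<integral>\<omega>. of_real (indicator {\<omega>\<in>space M. Y \<omega> = n} \<omega>) \<partial>M) = complex_of_real (prob {\<omega>\<in>space M. Y \<omega> = n})"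
    by (simp add: emeasure_eq_measure)
  moreover have "(\<integral>\<omega>. Yn \<omega> \<partial>M) = (\<integral>\<omega>. of_real (indicator {\<omega>\<in>space M. Y \<omega> = n} \<omega>) \<partial>M)"
    by (intro Bochner_Integration.integral_cong) (auto simp: Yn_def indicator_def)
  ultimately have prob_eq: "(\<integral>\<omega>. Yn \<omega> \<partial>M) = of_real (prob {\<omega>\<in>space M. Y \<omega> = n})"
    by (rule trans[rotated])
  have "(\<integral>\<omega>. indicator {\<omega>\<in>space M. Y \<omega> = n} \<omega> *\<^sub>R g (Z \<omega>) \<partial>M) = (\<integral>\<omega>. Yn \<omega> * g (Z \<omega>) \<partial>M)"
    by (intro Bochner_Integration.integral_cong) (auto simp: indicator_def Yn_def)
  also have "\<dots> = of_real (prob {\<omega>\<in>space M. Y \<omega> = n}) * (\<integral>\<omega>. g (Z \<omega>) \<partial>M)"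
    by (simp only: indep_prod prob_eq)
  finally show ?thesis
    by (simp only: scaleR_conv_of_real)
qed

lemma (in prob_space) integral_prod_iexp_indep:
  assumes X_char: "\<And>i. i \<ge> 1 \<Longrightarrow> (\<integral>\<omega>. iexp (\<theta> * X i \<omega>) \<partial>M) = \<phi>"
    and X_indep: "indep_vars (\<lambda>_. borel) X {1..}"
  shows "(\<integral>\<omega>. (\<Prod>i=1..n. iexp (\<theta> * X i \<omega>)) \<partial>M) = \<phi> ^ n"
proof -
  have "indep_vars (\<lambda>_. borel) X {1..n}"
    by (rule indep_vars_subset[OF X_indep]) auto
  then have indep: "indep_vars (\<lambda>_. borel) (\<lambda>i \<omega>. iexp (\<theta> * X i \<omega>)) {1..n}"
    by (rule indep_vars_compose2[where Y="\<lambda>i x. iexp (\<theta> * x)"]) measurable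
  have "integrable M (\<lambda>\<omega>. iexp (\<theta> * X i \<omega>))" if "i \<in> {1..n}" for i
    using indep that unfolding indep_vars_def2 by (intro integrable_const_bound[where B=1]) auto
  with indep have "(\<integral>\<omega>. (\<Prod>i=1..n. iexp (\<theta> * X i \<omega>)) \<partial>M) = (\<Prod>i=1..n. \<integral>\<omega>. iexp (\<theta> * X i \<omega>) \<partial>M)"
    by (intro indep_vars_lebesgue_integral) auto
  also have "\<dots> = (\<Prod>i=1..n. \<phi>)"
    by (rule prod.cong[OF refl]) (rule X_char, simp)
  finally show ?thesis
    by simp
qed

text \<open>Conditioning on the value of \<open>Y\<close>: given \<open>Y = n\<close> the sum has characteristic
  function \<open>\<phi>^n\<close>, by independence of \<open>Y\<close> and the summands.\<close>
lemma (in prob_space) char_random_sum: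
  fixes X :: "nat \<Rightarrow> 'a \<Rightarrow> real" and Y :: "'a \<Rightarrow> nat"
  assumes Y: "Y \<in> measurable M (count_space UNIV)"
    and X_char: "\<And>i. i \<ge> 1 \<Longrightarrow> (\<integral>\<omega>. iexp (\<theta> * X i \<omega>) \<partial>M) = \<phi>"
    and X_indep: "indep_vars (\<lambda>_. borel) X {1..}"
    and Y_X_indep: "indep_rv M (count_space UNIV) Y (Pi\<^sub>M {1..} (\<lambda>_. borel)) (\<lambda>\<omega>. \<lambda>i\<in>{1..}. X i \<omega>)"
  shows "(\<integral>\<omega>. iexp (\<theta> * (\<Sum>i=1..Y \<omega>. X i \<omega>)) \<partial>M) = (\<integral>\<omega>. \<phi> ^ Y \<omega> \<partial>M)"
proof -
  define P where "P n x = (\<Prod>i=1..n. iexp (\<theta> * x i))" for n and x :: "nat \<Rightarrow> real"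
  define Xs where "Xs \<omega> = (\<lambda>i\<in>{1..}. X i \<omega>)" for \<omega>
  have Xs_meas: "Xs \<in> measurable M (Pi\<^sub>M {1..} (\<lambda>_. borel))"
    using Y_X_indep unfolding indep_rv_def Xs_def by simp
  have P_meas: "P n \<in> borel_measurable (Pi\<^sub>M {1..} (\<lambda>_. borel))" for n
  proof -
    have "(\<lambda>x. x i) \<in> borel_measurable (Pi\<^sub>M {1..} (\<lambda>_. borel))" if "i \<in> {1..n}" for i
      using that by (intro measurable_component_singleton) simp
    then show ?thesis
      unfolding P_def by measurable
  qed
  have norm_P: "norm (P n x) = 1" for n x
    by (simp add: P_def prod_norm[symmetric])
  have E_P: "(\<integral>\<omega>. P n (Xs \<omega>) \<partial>M) = \<phi> ^ n" for n
    using integral_prod_iexp_indep[OF X_char X_indep] by (simp add: P_def Xs_def)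
  have "(\<lambda>n. \<integral>\<omega>. indicator {\<omega>\<in>space M. Y \<omega> = n} \<omega> *\<^sub>R P n (Xs \<omega>) \<partial>M) sums (\<integral>\<omega>. P (Y \<omega>) (Xs \<omega>) \<partial>M)"
    using Xs_meas P_meas norm_P by (intro sums_integral_nat_valued[OF Y, where B=1]) auto
  then have "(\<lambda>n. prob {\<omega>\<in>space M. Y \<omega> = n} *\<^sub>R \<phi> ^ n) sums (\<integral>\<omega>. P (Y \<omega>) (Xs \<omega>) \<partial>M)"
    using integral_indicator_indep[OF Y_X_indep[folded Xs_def] P_meas, where C=1] norm_P
    by (simp add: E_P)
  moreover have "(\<lambda>n. prob {\<omega>\<in>space M. Y \<omega> = n} *\<^sub>R \<phi> ^ n) sums (\<integral>\<omega>. \<phi> ^ Y \<omega> \<partial>M)"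
    using X_char[of 1] integral_norm_bound[of M "\<lambda>\<omega>. iexp (\<theta> * X 1 \<omega>)"]
    by (intro sums_integral_nat_valued_const[OF Y, where B=1]) (simp add: prob_space norm_power power_le_one)
  ultimately have "(\<integral>\<omega>. P (Y \<omega>) (Xs \<omega>) \<partial>M) = (\<integral>\<omega>. \<phi> ^ Y \<omega> \<partial>M)"
    by (rule sums_unique2)
  moreover have "P (Y \<omega>) (Xs \<omega>) = iexp (\<theta> * (\<Sum>i=1..Y \<omega>. X i \<omega>))" for \<omega>
  proof -
    have "P (Y \<omega>) (Xs \<omega>) = (\<Prod>i=1..Y \<omega>. iexp (\<theta> * X i \<omega>))"
      unfolding P_def Xs_def by (intro prod.cong) auto
    also have "\<dots> = iexp (\<theta> * (\<Sum>i=1..Y \<omega>. X i \<omega>))"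
      unfolding sum_distrib_left by (rule iexp_sum[symmetric]) simp
    finally show ?thesis .
  qed
  ultimately show ?thesis
    by simp
qed

lemma compound_poisson_char:
  fixes N :: "real \<Rightarrow> 'a \<Rightarrow> nat" and X :: "nat \<Rightarrow> 'a \<Rightarrow> real"
  assumes poisson: "is_poisson_process M r N"
    and X_dens: "\<And>i. i \<ge> 1 \<Longrightarrow> distributed M lborel (X i) f"
    and X_indep: "prob_space.indep_vars M (\<lambda>_. borel) X {1..}"
    and N_X_indep: "indep_rv M
        (Pi\<^sub>M {0::real..} (\<lambda>_. count_space (UNIV::nat set))) (path_of N)
        (Pi\<^sub>M {1::nat..} (\<lambda>_. borel)) (\<lambda>\<omega>. \<lambda>i\<in>{1::nat..}. X i \<omega>)"
    and t: "t \<ge> 0"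
  shows "(\<lambda>\<omega>. \<Sum>i=1..N t \<omega>. X i \<omega>) \<in> borel_measurable M"
    and "char (distr M borel (\<lambda>\<omega>. \<Sum>i=1..N t \<omega>. X i \<omega>)) \<theta>
       = exp (of_real t * (of_real r * (char (density lborel f) \<theta> - 1)))"
proof -
  have G: "is_GCP M 1 (\<lambda>_. r) N"
    using poisson unfolding is_poisson_process_def .
  interpret prob_space M
    using GCP_prob_space[OF G] .
  have Nt: "N t \<in> measurable M (count_space UNIV)"
    using GCP_measurable[OF G t] .
  have X_meas: "X i \<in> borel_measurable M" if "i \<ge> 1" for i
    using X_indep that unfolding indep_vars_def2 by auto
  show sum_meas: "(\<lambda>\<omega>. \<Sum>i=1..N t \<omega>. X i \<omega>) \<in> borel_measurable M"
    by (rule measurable_compose_countable[OF _ Nt]) (use X_meas in \<open>auto intro: borel_measurable_sum\<close>)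
  have X_char: "(\<integral>\<omega>. iexp (\<theta> * X i \<omega>) \<partial>M) = char (density lborel f) \<theta>" if "i \<ge> 1" for i
  proof -
    have D: "distr M lborel (X i) = density lborel f" and X_lborel: "X i \<in> measurable M lborel"
      using X_dens[OF that] unfolding distributed_def by auto
    have "char (density lborel f) \<theta> = (\<integral>x. iexp (\<theta> * x) \<partial>distr M lborel (X i))"
      by (simp add: char_def D)
    also have "\<dots> = (\<integral>\<omega>. iexp (\<theta> * X i \<omega>) \<partial>M)"
      using X_lborel by (rule integral_distr) simp
    finally show ?thesis ..
  qed
  have "indep_rv M (count_space UNIV) (\<lambda>\<omega>. path_of N \<omega> t)
      (Pi\<^sub>M {1..} (\<lambda>_. borel)) (\<lambda>\<omega>. \<lambda>i\<in>{1..}. X i \<omega>)"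
    using t by (intro indep_rv_compose[OF N_X_indep, where g="\<lambda>x. x"] measurable_component_singleton) auto
  then have "indep_rv M (count_space UNIV) (N t) (Pi\<^sub>M {1..} (\<lambda>_. borel)) (\<lambda>\<omega>. \<lambda>i\<in>{1..}. X i \<omega>)"
    using t by (simp add: path_of_def)
  then have "(\<integral>\<omega>. iexp (\<theta> * (\<Sum>i=1..N t \<omega>. X i \<omega>)) \<partial>M) = (\<integral>\<omega>. char (density lborel f) \<theta> ^ N t \<omega> \<partial>M)"
    using X_char X_indep by (intro char_random_sum[OF Nt]) auto
  also have "\<dots> = exp (of_real t * (of_real r * (char (density lborel f) \<theta> - 1)))"
    using GCP_pgf[OF G t, of "char (density lborel f) \<theta>"] X_char[of 1] integral_norm_bound[of M "\<lambda>\<omega>. iexp (\<theta> * X 1 \<omega>)"]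
    by (simp add: prob_space)
  finally show "char (distr M borel (\<lambda>\<omega>. \<Sum>i=1..N t \<omega>. X i \<omega>)) \<theta>
       = exp (of_real t * (of_real r * (char (density lborel f) \<theta> - 1)))"
    using sum_meas unfolding char_def by (simp add: integral_distr)
qed

lemma integral_indicator_iexp:
  "(\<integral>x. indicator {a..b} x *\<^sub>R iexp (\<theta> * x) \<partial>lborel) = integral {a..b} (\<lambda>x. iexp (\<theta> * x))"
proof -
  have "set_integrable lborel {a..b} (\<lambda>x. iexp (\<theta> * x))"
    by (intro borel_integrable_atLeastAtMost' continuous_intros)
  then show ?thesis
    using set_borel_integral_eq_integral(2) unfolding set_lebesgue_integral_def by blast
qed

lemma integral_indicator_iexp_pos:
  "c > 0 \<Longrightarrow> (\<integral>x. indicator {0..c} x *\<^sub>R iexp (\<theta> * x) \<partial>lborel) = c *\<^sub>R unif_char c \<theta>"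
  unfolding integral_indicator_iexp unif_char_def by simp

lemma integral_indicator_iexp_neg:
  assumes "c > 0"
  shows "(\<integral>x. indicator {-c..0} x *\<^sub>R iexp (\<theta> * x) \<partial>lborel) = c *\<^sub>R unif_char c (-\<theta>)"
proof -
  have "integral {-c..0} (\<lambda>x. iexp (\<theta> * x)) = integral {-c..-0} (\<lambda>x. (\<lambda>y. iexp (-\<theta> * y)) (-x))"
    by simp
  also have "\<dots> = integral {0..c} (\<lambda>y. iexp (-\<theta> * y))"
    by (rule Henstock_Kurzweil_Integration.integral_reflect_real)
  finally show ?thesis
    using assms
    unfolding integral_indicator_iexp unif_char_def by simp
qed

lemma char_gsp_density_eq:
  assumes lam: "\<And>j. j \<in> {1..k} \<Longrightarrow> lam j \<ge> 0" and mu: "\<And>j. j \<in> {1..k} \<Longrightarrow> mu j \<ge> 0"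
    and pos: "(\<Sum>j=1..k. lam j) + (\<Sum>j=1..k. mu j) > 0"
  shows "char (density lborel (\<lambda>x. ennreal (gsp_density k lam mu x))) \<theta>
    = (1 / ((\<Sum>j=1..k. lam j) + (\<Sum>j=1..k. mu j)))
      *\<^sub>R ((\<Sum>j=1..k. of_real (lam j) * unif_char (real j) \<theta>)
          + (\<Sum>j=1..k. of_real (mu j) * unif_char (real j) (-\<theta>)))"
proof -
  define L where "L = (\<Sum>j=1..k. lam j) + (\<Sum>j=1..k. mu j)"
  define pos_part where "pos_part j x = indicator {0..real j} x *\<^sub>R iexp (\<theta> * x)" for j x
  define neg_part where "neg_part j x = indicator {-real j..0} x *\<^sub>R iexp (\<theta> * x)" for j x
  have pos_int: "integral\<^sup>L lborel (pos_part j) = real j *\<^sub>R unif_char (real j) \<theta>" if "j \<ge> 1" for j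
    unfolding pos_part_def using that by (intro integral_indicator_iexp_pos) simp
  have neg_int: "integral\<^sup>L lborel (neg_part j) = real j *\<^sub>R unif_char (real j) (-\<theta>)" if "j \<ge> 1" for j
    unfolding neg_part_def using that by (intro integral_indicator_iexp_neg) simp
  have int: "integrable lborel (pos_part j)" "integrable lborel (neg_part j)" for j
    unfolding pos_part_def neg_part_def by (auto intro!: borel_integrable_compact continuous_intros)
  have "gsp_density k lam mu x \<ge> 0" for x
    unfolding gsp_density_def using lam mu pos
    by (intro add_nonneg_nonneg mult_nonneg_nonneg sum_nonneg divide_nonneg_nonneg) auto
  then have "char (density lborel (\<lambda>x. ennreal (gsp_density k lam mu x))) \<theta>
      = (\<integral>x. gsp_density k lam mu x *\<^sub>R iexp (\<theta> * x) \<partial>lborel)"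
    unfolding char_def by (intro integral_density) (auto simp: gsp_density_def)
  also have "\<dots> = (\<integral>x. (1 / L) *\<^sub>R ((\<Sum>j=1..k. (lam j / real j) *\<^sub>R pos_part j x)
                                    + (\<Sum>j=1..k. (mu j / real j) *\<^sub>R neg_part j x)) \<partial>lborel)"
    unfolding gsp_density_def L_def[symmetric] pos_part_def neg_part_def
    by (intro Bochner_Integration.integral_cong)
      (simp_all only: scaleR_add_left scaleR_add_right scaleR_sum_left scaleR_sum_right scaleR_scaleR
        mult.assoc sum_distrib_left)
  also have "\<dots> = (1 / L) *\<^sub>R ((\<Sum>j=1..k. (lam j / real j) *\<^sub>R integral\<^sup>L lborel (pos_part j))
                             + (\<Sum>j=1..k. (mu j / real j) *\<^sub>R integral\<^sup>L lborel (neg_part j)))"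
    using int by (simp add: Bochner_Integration.integral_add Bochner_Integration.integral_sum)
  also have "\<dots> = (1 / L) *\<^sub>R ((\<Sum>j=1..k. of_real (lam j) * unif_char (real j) \<theta>)
                             + (\<Sum>j=1..k. of_real (mu j) * unif_char (real j) (-\<theta>)))"
    by (intro arg_cong[where f="scaleR _"] arg_cong2[where f="(+)"] sum.cong)
      (simp_all add: pos_int neg_int scaleR_conv_of_real)
  finally show ?thesis
    unfolding L_def .
qed

lemma char_gsp_density:
  assumes lam: "\<And>j. j \<in> {1..k} \<Longrightarrow> lam j \<ge> 0" and mu: "\<And>j. j \<in> {1..k} \<Longrightarrow> mu j \<ge> 0"
    and pos: "(\<Sum>j=1..k. lam j) + (\<Sum>j=1..k. mu j) > 0"
  shows "of_real ((\<Sum>j=1..k. lam j) + (\<Sum>j=1..k. mu j))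
           * (char (density lborel (\<lambda>x. ennreal (gsp_density k lam mu x))) \<theta> - 1)
       = (\<Sum>j=1..k. of_real (lam j) * (unif_char (real j) \<theta> - 1))
       + (\<Sum>j=1..k. of_real (mu j) * (unif_char (real j) (-\<theta>) - 1))"
proof -
  define L where "L = (\<Sum>j=1..k. lam j) + (\<Sum>j=1..k. mu j)"
  have "L > 0"
    using pos by (simp add: L_def)
  then have cancel: "of_real L * ((1 / L) *\<^sub>R S - 1) = S - of_real L" for S :: complex
    by (simp add: scaleR_conv_of_real field_simps)
  define S where "S = (\<Sum>j=1..k. of_real (lam j) * unif_char (real j) \<theta>)
                   + (\<Sum>j=1..k. of_real (mu j) * unif_char (real j) (-\<theta>))"
  have "of_real L * (char (density lborel (\<lambda>x. ennreal (gsp_density k lam mu x))) \<theta> - 1)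
      = of_real L * ((1 / L) *\<^sub>R S - 1)"
    using char_gsp_density_eq[OF lam mu pos] by (simp only: L_def S_def)
  also have "\<dots> = S - of_real L"
    by (rule cancel)
  also have "\<dots> = (\<Sum>j=1..k. of_real (lam j) * (unif_char (real j) \<theta> - 1))
       + (\<Sum>j=1..k. of_real (mu j) * (unif_char (real j) (-\<theta>) - 1))"
    by (simp add: S_def L_def right_diff_distrib sum_subtractf)
  finally show ?thesis
    unfolding L_def .
qed

theorem theorem7p1:
  fixes M :: "'a measure" and M' :: "'b measure"
    and k :: nat and lam mu :: "nat \<Rightarrow> real"
    and M1 M2 :: "real \<Rightarrow> 'a \<Rightarrow> nat"
    and N :: "real \<Rightarrow> 'b \<Rightarrow> nat" and X :: "nat \<Rightarrow> 'b \<Rightarrow> real"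
  assumes gsp: "is_GSP_pair M k lam mu M1 M2"
    and pos: "(\<Sum>j=1..k. lam j) + (\<Sum>j=1..k. mu j) > 0"
    and poisson: "is_poisson_process M' ((\<Sum>j=1..k. lam j) + (\<Sum>j=1..k. mu j)) N"
    and X_dens: "\<And>i. i \<ge> 1 \<Longrightarrow>
        distributed M' lborel (X i) (\<lambda>x. ennreal (gsp_density k lam mu x))"
    and X_indep: "prob_space.indep_vars M' (\<lambda>_. borel) X {1..}"
    and N_X_indep: "indep_rv M'
        (Pi\<^sub>M {0::real..} (\<lambda>_. count_space (UNIV::nat set))) (path_of N)
        (Pi\<^sub>M {1::nat..} (\<lambda>_. borel)) (\<lambda>\<omega>. \<lambda>i\<in>{1::nat..}. X i \<omega>)"
    and t_pos: "t > 0"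
  shows "distr M borel (time_avg (GSP M1 M2) t)
       = distr M' borel (\<lambda>\<omega>. \<Sum>i=1..N t \<omega>. X i \<omega>)"
proof -
  have G1: "is_GCP M k lam M1" and G2: "is_GCP M k mu M2"
    using gsp unfolding is_GSP_pair_def by auto
  have "prob_space M'"
    using poisson unfolding is_poisson_process_def by (rule GCP_prob_space)
  note lhs_meas = GSP_time_avg_measurable[OF gsp t_pos]
  note lhs = GSP_time_avg_char[OF gsp t_pos]
  note rhs = compound_poisson_char[OF poisson X_dens X_indep N_X_indep less_imp_le[OF t_pos]]
  note exponent = char_gsp_density[OF GCP_rate_nonneg[OF G1] GCP_rate_nonneg[OF G2] pos]
  show ?thesis
  proof (rule Levy_uniqueness)
    show "real_distribution (distr M borel (time_avg (GSP M1 M2) t))"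
      using prob_space.real_distribution_distr[OF GCP_prob_space[OF G1] lhs_meas] .
    show "real_distribution (distr M' borel (\<lambda>\<omega>. \<Sum>i=1..N t \<omega>. X i \<omega>))"
      using prob_space.real_distribution_distr[OF \<open>prob_space M'\<close> rhs(1)] .
    show "char (distr M borel (time_avg (GSP M1 M2) t)) = char (distr M' borel (\<lambda>\<omega>. \<Sum>i=1..N t \<omega>. X i \<omega>))"
      by (rule ext) (simp only: lhs rhs(2) exponent)
  qed
qed

end
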